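(* Let $G$ be the Cayley graph of a finitely generated group with respect to a finite symmetric generating set, and suppose its volume growth satisfies $v(n)\succeq e^{n^{\alpha}}$ for some $0<\alpha<1$. Fix any $\beta<\frac{\alpha}{\alpha+1}$, and let $\{f(n)\}$ be a sequence of nonnegative integers with $f(n)=o(e^{n^{\beta}})$. Then $G$ does not satisfy the $\{f(n)\}$-containment property.
   Context: The volume growth is $v(n)=|B_n(\mathrm{id})|$, the number of group elements at word distance at most $n$ from the identity. For functions $g,h$, $g\preceq h$ means there is $C>0$ with $g(x)\leq C h(Cx)$ for all $x$, and $h\succeq g$ means $g\preceq h$. Firefighter process on a graph $G$ with a sequence of integers $\{f(n)\}$: an initial fire occupies a finite set of vertices; at each time $n\geq 1$, at most $f(n)$ vertices that are not on fire become protected, and then the fire spreads to all unprotected neighbours of vertices on fire; once a vertex is protected or on fire it stays so forever. $G$ has the $\{f(n)\}$-containment property if for every finite initial fire there is a protection strategy (protecting at most $f(n)$ vertices at time $n$) such that the set of burning vertices is eventually constant. *)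

theory Defs
  imports "HOL-Algebra.Algebra" "HOL-Library.Landau_Symbols"
begin

definition cayley_adj :: "('a, 'b) monoid_scheme \<Rightarrow> 'a set \<Rightarrow> 'a \<Rightarrow> 'a \<Rightarrow> bool" where
  "cayley_adj G S x y \<longleftrightarrow> x \<in> carrier G \<and> (\<exists>s\<in>S. y = x \<otimes>\<^bsub>G\<^esub> s)"

primrec word_ball :: "('a, 'b) monoid_scheme \<Rightarrow> 'a set \<Rightarrow> nat \<Rightarrow> 'a set" where
  "word_ball G S 0 = {\<one>\<^bsub>G\<^esub>}"
| "word_ball G S (Suc n) = word_ball G S n \<union> {x \<otimes>\<^bsub>G\<^esub> s | x s. x \<in> word_ball G S n \<and> s \<in> S}"

definition vol_growth :: "('a, 'b) monoid_scheme \<Rightarrow> 'a set \<Rightarrow> nat \<Rightarrow> nat" where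
  "vol_growth G S n = card (word_ball G S n)"

text \<open>Burning set after time n, given initial fire F and protection sets p 1, p 2, ...
  (p 0 is unused).\<close>
primrec burning :: "('a, 'b) monoid_scheme \<Rightarrow> 'a set \<Rightarrow> 'a set \<Rightarrow> (nat \<Rightarrow> 'a set) \<Rightarrow> nat \<Rightarrow> 'a set" where
  "burning G S F p 0 = F"
| "burning G S F p (Suc n) = burning G S F p n \<union>
     {y. (\<exists>x\<in>burning G S F p n. cayley_adj G S x y) \<and> y \<notin> (\<Union>k\<in>{1..Suc n}. p k)}"

definition valid_strategy :: "('a, 'b) monoid_scheme \<Rightarrow> 'a set \<Rightarrow> (nat \<Rightarrow> nat) \<Rightarrow> 'a set \<Rightarrow> (nat \<Rightarrow> 'a set) \<Rightarrow> bool" where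
  "valid_strategy G S f F p \<longleftrightarrow>
     (\<forall>n\<ge>1. p n \<subseteq> carrier G \<and> finite (p n) \<and> card (p n) \<le> f n
            \<and> p n \<inter> burning G S F p (n - 1) = {})"

definition containment_property :: "('a, 'b) monoid_scheme \<Rightarrow> 'a set \<Rightarrow> (nat \<Rightarrow> nat) \<Rightarrow> bool" where
  "containment_property G S f \<longleftrightarrow>
     (\<forall>F. finite F \<and> F \<subseteq> carrier G \<longrightarrow>
        (\<exists>p. valid_strategy G S f F p \<and> (\<exists>N. \<forall>n\<ge>N. burning G S F p n = burning G S F p N)))"

end

theory Submission
  imports Defs "HOL-Real_Asymp.Real_Asymp"
begin

text \<open>
  Translating a finite set \<open>A\<close> by the elements of the ball of radius \<open>r\<close> and counting the pairs
  \<open>(x, g)\<close> with \<open>x \<in> A\<close> and \<open>x g \<notin> A\<close> in two ways shows that \<open>|\<partial>A| \<ge> |A| / (2r)\<close> as soon as the ball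
  has at least \<open>2|A|\<close> elements. Under the growth \<open>v(n) \<succeq> exp(n\<^sup>\<alpha>)\<close> this happens for
  \<open>r \<approx> (log |A|)\<^bsup>1/\<alpha>\<^esup>\<close>, so an unprotected fire of size \<open>b\<close> gains about \<open>b / (log b)\<^bsup>1/\<alpha>\<^esup>\<close> vertices
  per step. For \<open>\<gamma> < \<alpha>/(\<alpha>+1)\<close> the increments of \<open>exp(n\<^sup>\<gamma>)\<close>, about \<open>n\<^bsup>\<gamma>-1\<^esup> exp(n\<^sup>\<gamma>)\<close>, are smaller
  than \<open>exp(n\<^sup>\<gamma>) / n\<^bsup>\<gamma>/\<alpha>\<^esup>\<close>, and so is the total number \<open>\<le> n exp(n\<^sup>\<delta>)\<close> of protected vertices
  for \<open>\<beta> < \<delta> < \<gamma>\<close>. Hence a large initial fire stays above \<open>exp((n+T)\<^sup>\<gamma>)\<close> forever and is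
  never contained.
\<close>

section \<open>Isoperimetry in Cayley graphs\<close>

definition outer_boundary :: "('a, 'b) monoid_scheme \<Rightarrow> 'a set \<Rightarrow> 'a set \<Rightarrow> 'a set" where
  "outer_boundary G S A = {x \<otimes>\<^bsub>G\<^esub> s | x s. x \<in> A \<and> s \<in> S} - A"

definition exit_set :: "('a, 'b) monoid_scheme \<Rightarrow> 'a set \<Rightarrow> 'a \<Rightarrow> 'a set" where
  "exit_set G A g = {x \<in> A. x \<otimes>\<^bsub>G\<^esub> g \<notin> A}"

lemma right_products_eq_image:
  "{x \<otimes>\<^bsub>G\<^esub> s | x s. x \<in> A \<and> s \<in> S} = (\<lambda>(x, s). x \<otimes>\<^bsub>G\<^esub> s) ` (A \<times> S)"
  by auto

lemma finite_outer_boundary: "finite A \<Longrightarrow> finite S \<Longrightarrow> finite (outer_boundary G S A)"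
  unfolding outer_boundary_def right_products_eq_image by simp

lemma finite_word_ball: "finite S \<Longrightarrow> finite (word_ball G S n)"
  by (induction n) (simp_all add: right_products_eq_image)

lemma word_ball_mono: "m \<le> n \<Longrightarrow> word_ball G S m \<subseteq> word_ball G S n"
  by (induction n rule: dec_induct) auto

lemma one_mem_word_ball: "\<one>\<^bsub>G\<^esub> \<in> word_ball G S n"
  using word_ball_mono[of 0 n G S] by simp

context group
begin

lemma word_ball_subset_carrier: "S \<subseteq> carrier G \<Longrightarrow> word_ball G S n \<subseteq> carrier G"
  by (induction n) auto

lemma card_exit_set_mult_le:
  assumes "finite A" "A \<subseteq> carrier G" "h \<in> carrier G" "s \<in> carrier G"
  shows "card (exit_set G A (h \<otimes> s)) \<le> card (exit_set G A h) + card (exit_set G A s)"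
proof -
  have "exit_set G A (h \<otimes> s) \<subseteq> exit_set G A h \<union> (\<lambda>y. y \<otimes> inv h) ` exit_set G A s"
  proof
    fix x
    assume x: "x \<in> exit_set G A (h \<otimes> s)"
    then have "x \<in> carrier G"
      using assms unfolding exit_set_def by auto
    then have "x = (x \<otimes> h) \<otimes> inv h" "(x \<otimes> h) \<otimes> s = x \<otimes> (h \<otimes> s)"
      using assms by (simp_all add: m_assoc)
    then show "x \<in> exit_set G A h \<union> (\<lambda>y. y \<otimes> inv h) ` exit_set G A s"
      using x unfolding exit_set_def by (metis (mono_tags, lifting) UnI1 UnI2 image_eqI mem_Collect_eq)
  qed
  then have "card (exit_set G A (h \<otimes> s)) \<le> card (exit_set G A h \<union> (\<lambda>y. y \<otimes> inv h) ` exit_set G A s)"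
    using assms by (intro card_mono) (auto simp: exit_set_def)
  also have "\<dots> \<le> card (exit_set G A h) + card ((\<lambda>y. y \<otimes> inv h) ` exit_set G A s)"
    by (rule card_Un_le)
  also have "card ((\<lambda>y. y \<otimes> inv h) ` exit_set G A s) \<le> card (exit_set G A s)"
    using assms by (intro card_image_le) (simp add: exit_set_def)
  finally show ?thesis
    by simp
qed

lemma card_exit_set_generator_le:
  assumes "finite A" "A \<subseteq> carrier G" "finite S" "S \<subseteq> carrier G" "s \<in> S"
  shows "card (exit_set G A s) \<le> card (outer_boundary G S A)"
proof (rule card_inj_on_le)
  show "inj_on (\<lambda>x. x \<otimes> s) (exit_set G A s)"
    using assms by (intro inj_on_subset[OF inj_on_multc]) (auto simp: exit_set_def)
  show "(\<lambda>x. x \<otimes> s) ` exit_set G A s \<subseteq> outer_boundary G S A"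
    using assms unfolding exit_set_def outer_boundary_def by blast
  show "finite (outer_boundary G S A)"
    using assms by (simp add: finite_outer_boundary)
qed

lemma card_exit_set_word_ball_le:
  assumes "finite A" "A \<subseteq> carrier G" "finite S" "S \<subseteq> carrier G"
  shows "g \<in> word_ball G S r \<Longrightarrow> card (exit_set G A g) \<le> r * card (outer_boundary G S A)"
proof (induction r arbitrary: g)
  case 0
  then show ?case
    using assms by (simp add: exit_set_def subset_eq)
next
  case (Suc r)
  show ?case
  proof (cases "g \<in> word_ball G S r")
    case True
    then show ?thesis
      using Suc.IH[of g] by simp
  next
    case False
    then obtain h s where "g = h \<otimes> s" "h \<in> word_ball G S r" "s \<in> S"
      using Suc.prems by auto
    moreover have "h \<in> carrier G" "s \<in> carrier G"
      using calculation word_ball_subset_carrier assms by blast+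
    ultimately show ?thesis
      using card_exit_set_mult_le[OF assms(1,2), of h s] Suc.IH[of h]
        card_exit_set_generator_le[OF assms, of s] by simp
  qed
qed

lemma isoperimetric_inequality:
  assumes "finite A" "A \<subseteq> carrier G" "finite S" "S \<subseteq> carrier G"
    and "2 * card A \<le> vol_growth G S r"
  shows "card A \<le> 2 * r * card (outer_boundary G S A)"
proof -
  define W where "W = word_ball G S r"
  define b where "b = card (outer_boundary G S A)"
  have W: "finite W" "W \<subseteq> carrier G" "card W = vol_growth G S r"
    unfolding W_def vol_growth_def using assms finite_word_ball word_ball_subset_carrier by auto
  have "0 < card W"
    using W(1) one_mem_word_ball unfolding W_def by (auto simp: card_gt_0_iff)
  have "card W - card A \<le> card {g \<in> W. x \<otimes> g \<notin> A}" if "x \<in> A" for x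
  proof -
    have "card {g \<in> W. x \<otimes> g \<in> A} \<le> card A"
      using that assms W by (intro card_inj_on_le[OF inj_on_subset[OF inj_on_cmult[of x]]]) auto
    moreover have "{g \<in> W. x \<otimes> g \<notin> A} = W - {g \<in> W. x \<otimes> g \<in> A}"
      by auto
    ultimately show ?thesis
      using W(1) by (simp add: card_Diff_subset)
  qed
  then have "card A * (card W - card A) \<le> (\<Sum>x\<in>A. card {g \<in> W. x \<otimes> g \<notin> A})"
    using sum_mono[of A "\<lambda>_. card W - card A"] by simp
  also have "\<dots> = (\<Sum>g\<in>W. card (exit_set G A g))"
    using sum.swap_restrict[OF \<open>finite A\<close> W(1), of "\<lambda>_ _. 1 :: nat" "\<lambda>x g. x \<otimes> g \<notin> A"]
    by (simp add: exit_set_def)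
  also have "\<dots> \<le> (\<Sum>g\<in>W. r * b)"
    unfolding b_def W_def using assms by (intro sum_mono card_exit_set_word_ball_le)
  finally have key: "card A * (card W - card A) \<le> card W * (r * b)"
    by simp
  have "card W * card A \<le> card A * (2 * (card W - card A))"
    using assms(5) W(3) by (subst mult.commute) (intro mult_left_mono; linarith)
  also have "\<dots> \<le> 2 * (card W * (r * b))"
    using key by simp
  finally have "card W * card A \<le> card W * (2 * r * b)"
    by (simp add: mult.assoc mult.left_commute)
  with \<open>0 < card W\<close> show ?thesis
    unfolding b_def by simp
qed

end

section \<open>Growth of the fire\<close>

lemma finite_burning: "finite F \<Longrightarrow> finite S \<Longrightarrow> finite (burning G S F p n)"
proof (induction n)
  case (Suc n)
  have "{y. (\<exists>x\<in>burning G S F p n. cayley_adj G S x y) \<and> y \<notin> (\<Union>k\<in>{1..Suc n}. p k)}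
      \<subseteq> (\<lambda>(x, s). x \<otimes>\<^bsub>G\<^esub> s) ` (burning G S F p n \<times> S)"
    unfolding cayley_adj_def by auto
  then have "finite {y. (\<exists>x\<in>burning G S F p n. cayley_adj G S x y) \<and> y \<notin> (\<Union>k\<in>{1..Suc n}. p k)}"
    by (rule finite_subset) (use Suc in simp)
  with Suc show ?case
    by simp
qed simp

lemma burning_mono: "m \<le> n \<Longrightarrow> burning G S F p m \<subseteq> burning G S F p n"
  by (induction n rule: dec_induct) auto

text \<open>
  If a fire has at least \<open>E n\<close> but fewer than \<open>E (n + 1)\<close> vertices, it is less than half of a ball
  of radius at most \<open>\<rho>\<close>, so its outer boundary has at least \<open>E n / (2\<rho>)\<close> vertices; the envelope
  condition says that this pays both for the growth to \<open>E (n + 1)\<close> and for every vertex protected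
  so far.
\<close>

definition fire_envelope :: "(nat \<Rightarrow> nat) \<Rightarrow> (nat \<Rightarrow> nat) \<Rightarrow> (nat \<Rightarrow> real) \<Rightarrow> bool" where
  "fire_envelope v f E \<longleftrightarrow>
     (\<forall>n. \<exists>\<rho>>0. \<exists>r. real r \<le> \<rho> \<and> 2 * E (Suc n) \<le> real (v r)
        \<and> E (Suc n) + real (\<Sum>k\<in>{1..Suc n}. f k) \<le> E n + E n / (2 * \<rho>))"

context group
begin

lemma burning_subset_carrier:
  "S \<subseteq> carrier G \<Longrightarrow> F \<subseteq> carrier G \<Longrightarrow> burning G S F p n \<subseteq> carrier G"
  by (induction n) (auto simp: cayley_adj_def)

lemma outer_boundary_burning_subset:
  assumes "S \<subseteq> carrier G" "F \<subseteq> carrier G"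
  shows "outer_boundary G S (burning G S F p n) - (\<Union>k\<in>{1..Suc n}. p k) \<subseteq> burning G S F p (Suc n)"
proof
  fix y
  assume y: "y \<in> outer_boundary G S (burning G S F p n) - (\<Union>k\<in>{1..Suc n}. p k)"
  then obtain x s where "y = x \<otimes> s" "x \<in> burning G S F p n" "s \<in> S"
    unfolding outer_boundary_def by auto
  with burning_subset_carrier[OF assms] have "cayley_adj G S x y"
    unfolding cayley_adj_def by blast
  with y \<open>x \<in> burning G S F p n\<close> show "y \<in> burning G S F p (Suc n)"
    by auto
qed

lemma card_burning_Suc_ge:
  assumes "finite S" "S \<subseteq> carrier G" "finite F" "F \<subseteq> carrier G" and p: "valid_strategy G S f F p"
  shows "card (burning G S F p n) + card (outer_boundary G S (burning G S F p n))
           \<le> card (burning G S F p (Suc n)) + (\<Sum>k\<in>{1..Suc n}. f k)"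
proof -
  define B where "B = burning G S F p n"
  define P where "P = (\<Union>k\<in>{1..Suc n}. p k)"
  have "finite B" "finite (outer_boundary G S B)"
    unfolding B_def using assms by (simp_all add: finite_burning finite_outer_boundary)
  have "finite P"
    using p unfolding P_def valid_strategy_def by auto
  have "card P \<le> (\<Sum>k\<in>{1..Suc n}. card (p k))"
    unfolding P_def by (rule card_UN_le) simp
  also have "\<dots> \<le> (\<Sum>k\<in>{1..Suc n}. f k)"
    using p unfolding valid_strategy_def by (intro sum_mono) auto
  finally have P_le: "card P \<le> (\<Sum>k\<in>{1..Suc n}. f k)" .
  have "card B + card (outer_boundary G S B - P) = card (B \<union> (outer_boundary G S B - P))"
    using \<open>finite B\<close> \<open>finite (outer_boundary G S B)\<close>
    by (intro card_Un_disjoint[symmetric]) (auto simp: outer_boundary_def)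
  also have "\<dots> \<le> card (burning G S F p (Suc n))"
    using outer_boundary_burning_subset[OF assms(2,4), of p n] burning_mono[of n "Suc n" G S F p]
      finite_burning[OF assms(3,1), of G p "Suc n"]
    unfolding B_def P_def by (intro card_mono) auto
  finally show ?thesis
    using diff_card_le_card_Diff[OF \<open>finite P\<close>, of "outer_boundary G S B"] P_le
    unfolding B_def by linarith
qed

lemma fire_envelope_le_card_burning:
  assumes "finite S" "S \<subseteq> carrier G" "finite F" "F \<subseteq> carrier G" and p: "valid_strategy G S f F p"
    and E: "fire_envelope (vol_growth G S) f E" "E 0 \<le> real (card F)"
  shows "E n \<le> real (card (burning G S F p n))"
proof (induction n)
  case 0
  then show ?case
    using E(2) by simp
next
  case (Suc n)
  define B where "B = burning G S F p n"
  have "finite B" "B \<subseteq> carrier G"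
    unfolding B_def using assms by (simp_all add: finite_burning burning_subset_carrier)
  have B_le: "card B \<le> card (burning G S F p (Suc n))"
    unfolding B_def using assms by (intro card_mono finite_burning burning_mono) simp_all
  obtain \<rho> r where "0 < \<rho>" "real r \<le> \<rho>" and vol: "2 * E (Suc n) \<le> real (vol_growth G S r)"
    and step: "E (Suc n) + real (\<Sum>k\<in>{1..Suc n}. f k) \<le> E n + E n / (2 * \<rho>)"
    using E(1) unfolding fire_envelope_def by meson
  show ?case
  proof (cases "E (Suc n) \<le> real (card B)")
    case True
    with B_le show ?thesis
      by linarith
  next
    case False
    with vol have "2 * card B \<le> vol_growth G S r"
      by linarith
    then have "card B \<le> 2 * r * card (outer_boundary G S B)"
      using assms \<open>finite B\<close> \<open>B \<subseteq> carrier G\<close> by (intro isoperimetric_inequality) simp_all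
    then have "real (card B) \<le> 2 * real r * card (outer_boundary G S B)"
      by (metis of_nat_le_iff of_nat_mult of_nat_numeral)
    also have "\<dots> \<le> 2 * \<rho> * card (outer_boundary G S B)"
      using \<open>real r \<le> \<rho>\<close> by (intro mult_right_mono) simp_all
    finally have "E n \<le> 2 * \<rho> * card (outer_boundary G S B)"
      using Suc.IH unfolding B_def by linarith
    then have "E n / (2 * \<rho>) \<le> card (outer_boundary G S B)"
      using \<open>0 < \<rho>\<close> by (simp add: divide_le_eq mult.commute)
    then show ?thesis
      using step Suc.IH card_burning_Suc_ge[OF assms(1-5), of n] unfolding B_def by linarith
  qed
qed

lemma not_containment_property_if_fire_envelope:
  assumes "finite S" "S \<subseteq> carrier G"
    and E: "fire_envelope (vol_growth G S) f E" "filterlim E at_top sequentially"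
    and "E 0 \<le> real (vol_growth G S r)"
  shows "\<not> containment_property G S f"
proof
  assume "containment_property G S f"
  define F where "F = word_ball G S r"
  have "finite F" "F \<subseteq> carrier G"
    unfolding F_def using assms(1,2) by (simp_all add: finite_word_ball word_ball_subset_carrier)
  have "E 0 \<le> real (card F)"
    using \<open>E 0 \<le> real (vol_growth G S r)\<close> by (simp add: F_def vol_growth_def)
  have "\<exists>p. valid_strategy G S f F p \<and> (\<exists>N. \<forall>n\<ge>N. burning G S F p n = burning G S F p N)"
    using \<open>containment_property G S f\<close> \<open>finite F\<close> \<open>F \<subseteq> carrier G\<close>
    unfolding containment_property_def by simp
  then obtain p N where p: "valid_strategy G S f F p"
    and stable: "\<forall>n\<ge>N. burning G S F p n = burning G S F p N"
    by blast
  have "\<forall>\<^sub>F n in sequentially. real (card (burning G S F p N)) < E n"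
    using E(2) filterlim_at_top_dense by blast
  then obtain M where M: "\<And>n. n \<ge> M \<Longrightarrow> real (card (burning G S F p N)) < E n"
    using eventually_sequentially by meson
  define n where "n = max M N"
  have "E n \<le> real (card (burning G S F p n))"
    using assms(1,2) \<open>finite F\<close> \<open>F \<subseteq> carrier G\<close> p E(1) \<open>E 0 \<le> real (card F)\<close>
    by (rule fire_envelope_le_card_burning)
  also have "burning G S F p n = burning G S F p N"
    using stable unfolding n_def by (meson max.cobounded2)
  also have "real (card (burning G S F p N)) < E n"
    using M unfolding n_def by simp
  finally show False
    by simp
qed

end

section \<open>A stretched exponential fire envelope\<close>

lemma powr_add_one_le:
  fixes m g :: real
  assumes "1 \<le> m" "0 < g" "g \<le> 1"
  shows "(m + 1) powr g \<le> m powr g + m powr (g - 1)"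
proof -
  have "m + 1 = m * (1 + 1 / m)"
    using assms by (simp add: field_simps)
  then have "(m + 1) powr g = m powr g * (1 + 1 / m) powr g"
    using assms by (simp add: powr_mult)
  also have "(1 + 1 / m) powr g \<le> 1 + 1 / m"
    using powr_mono[of g 1 "1 + 1 / m"] assms by simp
  also have "m powr g * (1 + 1 / m) = m powr g + m powr (g - 1)"
    using assms by (simp add: powr_diff field_simps)
  finally show ?thesis
    using assms by simp
qed

lemma stretched_exp_increment_le:
  fixes a g d C K :: real
  assumes "0 < a" "0 < d" "d < g" "g < 1" "g - 1 + g / a < 0" "0 < C"
  shows "\<forall>\<^sub>F m in at_top. exp ((m + 1) powr g) + K + (m + 1) * exp ((m + 1) powr d)
           \<le> exp (m powr g) + exp (m powr g) / (2 * C * ((2 * (m + 1) powr g) powr (1 / a) + 1))"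
proof -
  define D where "D m = (2 * (m + 1) powr g) powr (1 / a) + 1" for m :: real
  define h where "h m = 2 * m powr (g - 1) + (K + (m + 1) * exp ((m + 1) powr d)) * exp (- (m powr g))"
    for m :: real
  have "((\<lambda>m. m powr (g - 1) * D m) \<longlongrightarrow> 0) at_top"
    unfolding D_def using assms by real_asymp
  moreover have "((\<lambda>m. (K + (m + 1) * exp ((m + 1) powr d)) * exp (- (m powr g)) * D m) \<longlongrightarrow> 0) at_top"
    unfolding D_def using assms by real_asymp
  ultimately have "((\<lambda>m. 2 * C * (2 * (m powr (g - 1) * D m)
      + (K + (m + 1) * exp ((m + 1) powr d)) * exp (- (m powr g)) * D m)) \<longlongrightarrow> 2 * C * (2 * 0 + 0)) at_top"
    by (intro tendsto_intros)
  then have "\<forall>\<^sub>F m in at_top. 2 * C * D m * h m < 1"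
    unfolding h_def by (rule order_tendstoD(2)[THEN eventually_mono]) (simp_all add: algebra_simps)
  moreover have "((\<lambda>m. m powr (g - 1)) \<longlongrightarrow> 0) at_top"
    using assms by real_asymp
  then have "\<forall>\<^sub>F m in at_top. m powr (g - 1) < 1 / 2"
    by (rule order_tendstoD) simp
  moreover have "\<forall>\<^sub>F m in at_top. 1 \<le> (m :: real)"
    by (rule eventually_ge_at_top)
  ultimately show ?thesis
  proof eventually_elim
    case (elim m)
    have D_pos: "0 < 2 * C * D m"
      using \<open>0 < C\<close> unfolding D_def by (simp add: add_nonneg_pos)
    have "exp ((m + 1) powr g) \<le> exp (m powr g) * exp (m powr (g - 1))"
      using powr_add_one_le[of m g] elim assms by (simp add: exp_add[symmetric])
    also have "exp (m powr (g - 1)) \<le> 1 + 2 * m powr (g - 1)"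
      using elim by (intro real_exp_bound_lemma) simp_all
    finally have "exp ((m + 1) powr g) + K + (m + 1) * exp ((m + 1) powr d)
        \<le> exp (m powr g) * (1 + 2 * m powr (g - 1)) + K + (m + 1) * exp ((m + 1) powr d)"
      by simp
    also have "\<dots> = exp (m powr g) + exp (m powr g) * h m"
      unfolding h_def by (simp add: field_simps exp_minus)
    also have "h m \<le> 1 / (2 * C * D m)"
      using elim D_pos by (simp add: field_simps)
    finally show ?case
      unfolding D_def by (simp add: mult_left_mono)
  qed
qed

lemma exp_le_volume_at_radius:
  fixes v :: "nat \<Rightarrow> nat" and \<alpha> C x :: real
  assumes "0 < \<alpha>" "0 < C"
    and growth: "\<forall>n. exp (real n powr \<alpha>) \<le> C * real (v (nat \<lfloor>C * real n\<rfloor>))"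
    and "0 \<le> x"
  obtains r where "exp x \<le> C * real (v r)" "real r \<le> C * (x powr (1 / \<alpha>) + 1)"
proof -
  define k where "k = nat \<lceil>x powr (1 / \<alpha>)\<rceil>"
  have k_ge: "x powr (1 / \<alpha>) \<le> real k"
    unfolding k_def by (rule real_nat_ceiling_ge)
  have k_le: "real k \<le> x powr (1 / \<alpha>) + 1"
    unfolding k_def using powr_ge_zero[of x "1 / \<alpha>"] by linarith
  have "x = (x powr (1 / \<alpha>)) powr \<alpha>"
    using assms by (simp add: powr_powr)
  also have "\<dots> \<le> real k powr \<alpha>"
    using k_ge \<open>0 < \<alpha>\<close> by (intro powr_mono2) auto
  finally have "exp x \<le> C * real (v (nat \<lfloor>C * real k\<rfloor>))"
    using growth by (meson exp_le_cancel_iff order.trans)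
  moreover have "real (nat \<lfloor>C * real k\<rfloor>) \<le> C * (x powr (1 / \<alpha>) + 1)"
    using k_le \<open>0 < C\<close> by (smt (verit) mult_left_mono of_nat_0_le_iff of_nat_floor zero_le_mult_iff)
  ultimately show thesis
    by (rule that)
qed

lemma twice_exp_le_volume_at_radius:
  fixes v :: "nat \<Rightarrow> nat" and \<alpha> C y :: real
  assumes "0 < \<alpha>" "0 < C"
    and growth: "\<forall>n. exp (real n powr \<alpha>) \<le> C * real (v (nat \<lfloor>C * real n\<rfloor>))"
    and "0 \<le> y" "ln (2 * C) \<le> y"
  obtains r where "2 * exp y \<le> real (v r)" "real r \<le> C * ((2 * y) powr (1 / \<alpha>) + 1)"
proof -
  obtain r where r: "exp (2 * y) \<le> C * real (v r)" "real r \<le> C * ((2 * y) powr (1 / \<alpha>) + 1)"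
    using exp_le_volume_at_radius[OF \<open>0 < \<alpha>\<close> \<open>0 < C\<close> growth, of "2 * y"] \<open>0 \<le> y\<close> by auto
  have "2 * C \<le> exp y"
    using \<open>ln (2 * C) \<le> y\<close> \<open>0 < C\<close> by (metis exp_le_cancel_iff exp_ln mult_pos_pos zero_less_numeral)
  then have "2 * C * exp y \<le> exp y * exp y"
    by (intro mult_right_mono) auto
  also have "\<dots> = exp (2 * y)"
    by (simp add: exp_add[symmetric])
  also have "\<dots> \<le> C * real (v r)"
    by (rule r(1))
  finally have "2 * exp y \<le> real (v r)"
    using \<open>0 < C\<close> by simp
  then show thesis
    using r(2) by (rule that)
qed

lemma volume_unbounded:
  fixes v :: "nat \<Rightarrow> nat" and \<alpha> C y :: real
  assumes "0 < \<alpha>" "0 < C"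
    and growth: "\<forall>n. exp (real n powr \<alpha>) \<le> C * real (v (nat \<lfloor>C * real n\<rfloor>))"
  obtains r where "y \<le> real (v r)"
proof -
  define x where "x = max 0 (ln (C * y))"
  obtain r where r: "exp x \<le> C * real (v r)"
    using exp_le_volume_at_radius[OF assms, of x] unfolding x_def by auto
  have "C * y \<le> exp x"
  proof (cases "0 < C * y")
    case True
    then show ?thesis
      unfolding x_def by (metis exp_le_cancel_iff exp_ln max.cobounded2)
  qed (simp add: order.trans[OF _ less_imp_le[OF exp_gt_zero]])
  with r have "C * y \<le> C * real (v r)"
    by linarith
  with \<open>0 < C\<close> show thesis
    by (intro that) simp
qed

lemma sum_le_of_eventually_le_exp:
  fixes f :: "nat \<Rightarrow> nat" and \<beta> \<delta> :: real
  assumes f_le: "\<forall>\<^sub>F n in sequentially. real (f n) \<le> exp (real n powr \<beta>)"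
    and "\<beta> \<le> \<delta>" "0 \<le> \<delta>"
  obtains K where "\<And>n. real (\<Sum>k\<in>{1..n}. f k) \<le> K + real n * exp (real n powr \<delta>)"
proof -
  obtain N where N: "\<And>n. n \<ge> N \<Longrightarrow> real (f n) \<le> exp (real n powr \<beta>)"
    using f_le by (auto simp: eventually_sequentially)
  have "real (\<Sum>k\<in>{1..n}. f k) \<le> (\<Sum>k<N. real (f k)) + real n * exp (real n powr \<delta>)" for n
  proof -
    have term_le: "real (f k) \<le> (if k < N then real (f k) else 0) + exp (real n powr \<delta>)"
      if k: "k \<in> {1..n}" for k
    proof (cases "k < N")
      case False
      then have "real (f k) \<le> exp (real k powr \<beta>)"
        using N by simp
      also have "real k powr \<beta> \<le> real k powr \<delta>"
        using k \<open>\<beta> \<le> \<delta>\<close> by (intro powr_mono) auto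
      also have "real k powr \<delta> \<le> real n powr \<delta>"
        using k \<open>0 \<le> \<delta>\<close> by (intro powr_mono2) auto
      finally show ?thesis
        using False by simp
    qed simp
    have "real (\<Sum>k\<in>{1..n}. f k) \<le> (\<Sum>k\<in>{1..n}. (if k < N then real (f k) else 0) + exp (real n powr \<delta>))"
      unfolding of_nat_sum by (rule sum_mono) (rule term_le)
    also have "\<dots> = (\<Sum>k\<in>{1..n} \<inter> {..<N}. real (f k)) + real n * exp (real n powr \<delta>)"
      by (simp add: sum.distrib sum.inter_restrict)
    also have "(\<Sum>k\<in>{1..n} \<inter> {..<N}. real (f k)) \<le> (\<Sum>k<N. real (f k))"
      by (intro sum_mono2) auto
    finally show ?thesis
      by simp
  qed
  then show thesis
    by (rule that)
qed

lemma fire_envelope_shifted_stretched_exp: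
  fixes v f :: "nat \<Rightarrow> nat" and \<alpha> \<gamma> \<delta> C K :: real
  assumes "0 < \<alpha>" "0 < C"
    and growth: "\<forall>n. exp (real n powr \<alpha>) \<le> C * real (v (nat \<lfloor>C * real n\<rfloor>))"
    and sum_le: "\<And>n. real (\<Sum>k\<in>{1..n}. f k) \<le> K + real n * exp (real n powr \<delta>)"
    and large: "\<And>n. n \<ge> T \<Longrightarrow> ln (2 * C) \<le> (real n + 1) powr \<gamma> \<and>
      exp ((real n + 1) powr \<gamma>) + K + (real n + 1) * exp ((real n + 1) powr \<delta>)
        \<le> exp (real n powr \<gamma>) + exp (real n powr \<gamma>) / (2 * C * ((2 * (real n + 1) powr \<gamma>) powr (1 / \<alpha>) + 1))"
  shows "fire_envelope v f (\<lambda>n. exp (real (n + T) powr \<gamma>))"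
proof -
  define E where "E n = exp (real (n + T) powr \<gamma>)" for n
  have "\<exists>\<rho>>0. \<exists>r. real r \<le> \<rho> \<and> 2 * E (Suc n) \<le> real (v r)
      \<and> E (Suc n) + real (\<Sum>k\<in>{1..Suc n}. f k) \<le> E n + E n / (2 * \<rho>)" for n
  proof -
    define m where "m = real (n + T)"
    define \<rho> where "\<rho> = C * ((2 * (m + 1) powr \<gamma>) powr (1 / \<alpha>) + 1)"
    have E_Suc: "E (Suc n) = exp ((m + 1) powr \<gamma>)" and E_n: "E n = exp (m powr \<gamma>)"
      unfolding E_def m_def by (simp_all add: add.commute)
    have "ln (2 * C) \<le> (m + 1) powr \<gamma>" and step: "exp ((m + 1) powr \<gamma>) + K + (m + 1) * exp ((m + 1) powr \<delta>)
        \<le> exp (m powr \<gamma>) + exp (m powr \<gamma>) / (2 * \<rho>)"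
      using large[of "n + T"] unfolding m_def \<rho>_def by (simp_all add: mult.assoc)
    then obtain r where "2 * E (Suc n) \<le> real (v r)" "real r \<le> \<rho>"
      using twice_exp_le_volume_at_radius[OF \<open>0 < \<alpha>\<close> \<open>0 < C\<close> growth, of "(m + 1) powr \<gamma>"]
      unfolding E_Suc \<rho>_def by auto
    moreover have "0 < \<rho>"
      unfolding \<rho>_def using \<open>0 < C\<close> by (simp add: add_nonneg_pos)
    moreover have "real (\<Sum>k\<in>{1..Suc n}. f k) \<le> K + (m + 1) * exp ((m + 1) powr \<delta>)"
    proof -
      have "real (\<Sum>k\<in>{1..Suc n}. f k) \<le> real (\<Sum>k\<in>{1..Suc (n + T)}. f k)"
        by (intro of_nat_mono sum_mono2) auto
      also have "\<dots> \<le> K + real (Suc (n + T)) * exp (real (Suc (n + T)) powr \<delta>)"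
        by (rule sum_le)
      also have "real (Suc (n + T)) = m + 1"
        unfolding m_def by simp
      finally show ?thesis .
    qed
    ultimately show ?thesis
      using step unfolding E_Suc E_n by (intro exI[of _ \<rho>]) auto
  qed
  then show ?thesis
    unfolding fire_envelope_def E_def by blast
qed

lemma fire_envelope_exists:
  fixes v f :: "nat \<Rightarrow> nat" and \<alpha> \<beta> C :: real
  assumes "0 < \<alpha>" "0 < C"
    and growth: "\<forall>n. exp (real n powr \<alpha>) \<le> C * real (v (nat \<lfloor>C * real n\<rfloor>))"
    and "\<beta> < \<alpha> / (\<alpha> + 1)"
    and f_le: "\<forall>\<^sub>F n in sequentially. real (f n) \<le> exp (real n powr \<beta>)"
  obtains E where "fire_envelope v f E" "filterlim E at_top sequentially"
proof -
  have "max \<beta> 0 < \<alpha> / (\<alpha> + 1)"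
    using assms by simp
  then obtain \<gamma> \<delta> where "max \<beta> 0 < \<delta>" "\<delta> < \<gamma>" and \<gamma>_lt: "\<gamma> < \<alpha> / (\<alpha> + 1)"
    by (meson dense)
  then have "0 < \<delta>" "\<beta> \<le> \<delta>" "0 < \<gamma>"
    by simp_all
  have "\<gamma> < 1"
    using \<gamma>_lt \<open>0 < \<alpha>\<close> by (smt (verit) divide_less_eq_1_pos)
  have "\<gamma> - 1 + \<gamma> / \<alpha> < 0"
    using \<gamma>_lt \<open>0 < \<alpha>\<close> by (simp add: field_simps)
  obtain K where K: "\<And>n. real (\<Sum>k\<in>{1..n}. f k) \<le> K + real n * exp (real n powr \<delta>)"
    using sum_le_of_eventually_le_exp[OF f_le \<open>\<beta> \<le> \<delta>\<close>] \<open>0 < \<delta>\<close> by auto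
  define P where "P m \<longleftrightarrow> ln (2 * C) \<le> (m + 1) powr \<gamma> \<and>
      exp ((m + 1) powr \<gamma>) + K + (m + 1) * exp ((m + 1) powr \<delta>)
        \<le> exp (m powr \<gamma>) + exp (m powr \<gamma>) / (2 * C * ((2 * (m + 1) powr \<gamma>) powr (1 / \<alpha>) + 1))"
    for m :: real
  have "\<forall>\<^sub>F m in at_top. P m"
    unfolding P_def using \<open>0 < \<gamma>\<close>
      stretched_exp_increment_le[OF \<open>0 < \<alpha>\<close> \<open>0 < \<delta>\<close> \<open>\<delta> < \<gamma>\<close> \<open>\<gamma> < 1\<close> \<open>\<gamma> - 1 + \<gamma> / \<alpha> < 0\<close> \<open>0 < C\<close>]
    by (intro eventually_conj) (real_asymp, simp)
  then have "\<forall>\<^sub>F n in sequentially. P (real n)"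
    by (rule eventually_compose_filterlim[OF _ filterlim_real_sequentially])
  then obtain T where "\<And>n. n \<ge> T \<Longrightarrow> P (real n)"
    by (auto simp: eventually_sequentially)
  then have "fire_envelope v f (\<lambda>n. exp (real (n + T) powr \<gamma>))"
    unfolding P_def by (intro fire_envelope_shifted_stretched_exp[OF \<open>0 < \<alpha>\<close> \<open>0 < C\<close> growth K]) simp
  moreover have "filterlim (\<lambda>n. exp (real (n + T) powr \<gamma>)) at_top sequentially"
    using \<open>0 < \<gamma>\<close> by real_asymp
  ultimately show thesis
    by (rule that)
qed

theorem theorem3:
  fixes G :: "('a, 'b) monoid_scheme" and S :: "'a set" and f :: "nat \<Rightarrow> nat"
    and \<alpha> \<beta> :: real
  assumes "group G"
    and "finite S" and "S \<subseteq> carrier G" and "\<forall>s\<in>S. inv\<^bsub>G\<^esub> s \<in> S"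
    and "generate G S = carrier G"
    and "0 < \<alpha>" and "\<alpha> < 1"
    and "\<exists>C>0. \<forall>n::nat. exp (real n powr \<alpha>) \<le> C * real (vol_growth G S (nat \<lfloor>C * real n\<rfloor>))"
    and "\<beta> < \<alpha> / (\<alpha> + 1)"
    and "(\<lambda>n. real (f n)) \<in> o(\<lambda>n. exp (real n powr \<beta>))"
  shows "\<not> containment_property G S f"
proof -
  interpret group G by fact
  obtain C where "0 < C"
    and growth: "\<forall>n. exp (real n powr \<alpha>) \<le> C * real (vol_growth G S (nat \<lfloor>C * real n\<rfloor>))"
    using assms(8) by blast
  have "\<forall>\<^sub>F n in sequentially. real (f n) \<le> exp (real n powr \<beta>)"
    using landau_o.smallD[OF assms(10), of 1] by simp
  then obtain E where "fire_envelope (vol_growth G S) f E" "filterlim E at_top sequentially"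
    using fire_envelope_exists[OF \<open>0 < \<alpha>\<close> \<open>0 < C\<close> growth \<open>\<beta> < \<alpha> / (\<alpha> + 1)\<close>] by blast
  moreover obtain r where "E 0 \<le> real (vol_growth G S r)"
    using volume_unbounded[OF \<open>0 < \<alpha>\<close> \<open>0 < C\<close> growth] by blast
  ultimately show ?thesis
    using assms(2,3) by (intro not_containment_property_if_fire_envelope)
qed

end
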